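(* Let $g_n$ ($n\ge0$) denote the parity of the number of digits equal to $1$ in the negabinary representation of $n$. Then the infinite word $g_0g_1g_2\cdots$ is cube-free: there is no nonempty finite word $X$ over $\{0,1\}$ such that $XXX$ occurs as a block of consecutive terms $g_a g_{a+1}\cdots g_{a+3|X|-1}$ for some $a\ge0$.
   Context: Every nonnegative integer $n$ has a unique representation $n=\sum_{i\ge0} d_i(-2)^i$ with digits $d_i\in\{0,1\}$, only finitely many nonzero; this is the negabinary (base $-2$) representation. Parity means the number modulo $2$. *)

theory Defs
  imports Main
begin

definition negaval :: "nat list \<Rightarrow> int" where
  "negaval ds = (\<Sum>i<length ds. int (ds ! i) * (-2) ^ i)"

definition is_negabinary_rep :: "nat \<Rightarrow> nat list \<Rightarrow> bool" where
  "is_negabinary_rep n ds \<longleftrightarrow> set ds \<subseteq> {0, 1} \<and> (ds \<noteq> [] \<longrightarrow> last ds \<noteq> 0)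
     \<and> negaval ds = int n"

definition negabinary :: "nat \<Rightarrow> nat list" where
  "negabinary n = (THE ds. is_negabinary_rep n ds)"

definition g :: "nat \<Rightarrow> nat" where
  "g n = (count_list (negabinary n) 1) mod 2"

end

theory Submission
  imports Defs
begin

text \<open>Splitting off the lowest digit, \<open>n = d - 2m\<close> with \<open>d \<in> {0,1}\<close>, gives
  \<open>g(d - 2m) = g(m) + d (mod 2)\<close>; since \<open>m\<close> may be negative, \<open>g\<close> is first extended to all
  integers. Applying this twice yields \<open>g(4k) = g(k)\<close>, \<open>g(4k+1) = 1 - g(k)\<close>,
  \<open>g(4k+2) = 1 - g(k+1)\<close>, \<open>g(4k+3) = g(k+1)\<close>. Hence \<open>g\<close> changes value after every even
  position, never after a position \<open>\<equiv> 3 (mod 4)\<close>, and after \<open>4k+1\<close> exactly when it does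
  after \<open>k\<close>. Inside a cube of period \<open>p\<close> the pattern of changes is \<open>p\<close>-periodic, so
  comparing residues mod 4 rules out every \<open>p\<close> not divisible by 4, while a cube of period
  \<open>4q\<close> yields one of period \<open>q\<close> on the positions divisible by 4.\<close>

definition is_negabinary_int :: "int \<Rightarrow> nat list \<Rightarrow> bool" where
  "is_negabinary_int z ds \<longleftrightarrow> set ds \<subseteq> {0, 1} \<and> (ds \<noteq> [] \<longrightarrow> last ds \<noteq> 0) \<and> negaval ds = z"

lemma negaval_Nil [simp]: "negaval [] = 0"
  by (simp add: negaval_def)

lemma negaval_Cons [simp]: "negaval (d # ds) = int d + (-2) * negaval ds"
proof -
  have "negaval (d # ds) = (\<Sum>i<Suc (length ds). int ((d # ds) ! i) * (-2) ^ i)"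
    by (simp add: negaval_def)
  also have "\<dots> = int d + (\<Sum>i<length ds. int (ds ! i) * (-2) ^ Suc i)"
    by (subst sum.lessThan_Suc_shift) simp
  also have "\<dots> = int d + (-2) * negaval ds"
    by (simp add: negaval_def sum_distrib_left mult.commute mult.left_commute)
  finally show ?thesis .
qed

lemma binary_digit_step_inj:
  assumes "d \<in> {0, 1}" "e \<in> {0, 1}" "int d + (-2) * x = int e + (-2) * y"
  shows "d = e \<and> x = y"
proof -
  have "d = 0 \<or> d = 1" "e = 0 \<or> e = 1" using assms(1,2) by auto
  with assms(3) show ?thesis by presburger
qed

lemma is_negabinary_int_Nil_iff: "is_negabinary_int z [] \<longleftrightarrow> z = 0"
  by (auto simp: is_negabinary_int_def)

lemma is_negabinary_int_0_iff: "is_negabinary_int 0 ds \<longleftrightarrow> ds = []"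
proof
  show "ds = []" if "is_negabinary_int 0 ds" using that
  proof (induction ds)
    case (Cons e es)
    then have "e \<in> {0, 1}" "int e + (-2) * negaval es = 0"
      by (auto simp: is_negabinary_int_def)
    then have "e = 0" "negaval es = 0"
      using binary_digit_step_inj[of e 0 "negaval es" 0] by auto
    with Cons show ?case by (cases es) (auto simp: is_negabinary_int_def)
  qed simp
qed (simp add: is_negabinary_int_Nil_iff)

lemma is_negabinary_int_Cons_iff:
  "is_negabinary_int z (d # ds) \<longleftrightarrow>
     d \<in> {0, 1} \<and> \<not> (d = 0 \<and> negaval ds = 0) \<and> z = int d + (-2) * negaval ds
     \<and> is_negabinary_int (negaval ds) ds"
  using is_negabinary_int_0_iff[of ds] by (cases ds) (auto simp: is_negabinary_int_def)

lemma is_negabinary_int_unique: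
  "is_negabinary_int z xs \<Longrightarrow> is_negabinary_int z ys \<Longrightarrow> xs = ys"
proof (induction xs arbitrary: z ys)
  case Nil
  then show ?case by (simp add: is_negabinary_int_Nil_iff is_negabinary_int_0_iff)
next
  case (Cons x xs)
  show ?case
  proof (cases ys)
    case Nil
    with Cons.prems show ?thesis by (simp add: is_negabinary_int_Nil_iff is_negabinary_int_0_iff)
  next
    case (Cons y ys')
    with Cons.prems have "x \<in> {0, 1}" "y \<in> {0, 1}"
      and "int x + (-2) * negaval xs = int y + (-2) * negaval ys'"
      and xs: "is_negabinary_int (negaval xs) xs" and ys': "is_negabinary_int (negaval ys') ys'"
      by (simp_all add: is_negabinary_int_Cons_iff)
    then have "x = y" and "negaval xs = negaval ys'"
      using binary_digit_step_inj[of x y "negaval xs" "negaval ys'"] by simp_all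
    with xs ys' Cons.IH have "xs = ys'" by metis
    with \<open>x = y\<close> Cons show ?thesis by simp
  qed
qed

lemma is_negabinary_int_exists: "\<exists>ds. is_negabinary_int z ds"
proof (induction z rule: measure_induct_rule[where f = "\<lambda>z. nat (2 * \<bar>z\<bar> + (if z < 0 then 1 else 0))"])
  case (less z)
  show ?case
  proof (cases "z = 0")
    case True
    then show ?thesis using is_negabinary_int_Nil_iff by blast
  next
    case False
    define d where "d = nat (z mod 2)"
    define z' where "z' = (int d - z) div 2"
    have "z mod 2 = 0 \<or> z mod 2 = 1" by presburger
    then have d: "d \<in> {0, 1}" unfolding d_def by auto
    have "int d = z mod 2" unfolding d_def by simp
    then have z: "z = int d + (-2) * z'" unfolding z'_def by presburger
    with d have "nat (2 * \<bar>z'\<bar> + (if z' < 0 then 1 else 0)) < nat (2 * \<bar>z\<bar> + (if z < 0 then 1 else 0))"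
      using False by auto
    then obtain ds where "is_negabinary_int z' ds" using less by blast
    with d z False have "is_negabinary_int z (d # ds)"
      by (auto simp: is_negabinary_int_Cons_iff is_negabinary_int_def)
    then show ?thesis by blast
  qed
qed

definition negabinary_int :: "int \<Rightarrow> nat list" where
  "negabinary_int z = (THE ds. is_negabinary_int z ds)"

lemma is_negabinary_int_negabinary_int: "is_negabinary_int z (negabinary_int z)"
  unfolding negabinary_int_def
  by (rule theI') (use is_negabinary_int_exists is_negabinary_int_unique in blast)

lemma negabinary_int_eqI: "is_negabinary_int z ds \<Longrightarrow> negabinary_int z = ds"
  using is_negabinary_int_negabinary_int is_negabinary_int_unique by blast

lemma negabinary_of_nat: "negabinary n = negabinary_int (int n)"
proof -
  have "is_negabinary_rep n = is_negabinary_int (int n)"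
    by (simp add: fun_eq_iff is_negabinary_rep_def is_negabinary_int_def)
  then show ?thesis by (simp add: negabinary_def negabinary_int_def)
qed

definition negaparity :: "int \<Rightarrow> nat" where
  "negaparity z = count_list (negabinary_int z) 1 mod 2"

lemma g_eq_negaparity: "g n = negaparity (int n)"
  by (simp add: g_def negaparity_def negabinary_of_nat)

lemma negaparity_less_2: "negaparity z < 2"
  by (simp add: negaparity_def)

lemma negaparity_digit:
  assumes "d \<in> {0, 1}"
  shows "negaparity (int d + (-2) * z) = (d + negaparity z) mod 2"
proof (cases "d = 0 \<and> z = 0")
  case True
  then show ?thesis by (simp add: negaparity_def)
next
  case False
  have "negaval (negabinary_int z) = z"
    using is_negabinary_int_negabinary_int[of z] by (simp add: is_negabinary_int_def)
  then have "is_negabinary_int (int d + (-2) * z) (d # negabinary_int z)"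
    using assms False is_negabinary_int_negabinary_int[of z]
    by (simp add: is_negabinary_int_Cons_iff)
  then have "negabinary_int (int d + (-2) * z) = d # negabinary_int z"
    by (rule negabinary_int_eqI)
  then show ?thesis using assms by (auto simp: negaparity_def mod_Suc)
qed

lemma negaparity_double: "negaparity (2 * m) = negaparity (- m)"
  using negaparity_digit[of 0 "- m"] negaparity_less_2[of "- m"] by simp

lemma negaparity_double_plus_1: "negaparity (2 * m + 1) = 1 - negaparity (- m)"
  using negaparity_digit[of 1 "- m"] negaparity_less_2[of "- m"]
  by (auto simp: add.commute less_2_cases_iff)

lemma negaparity_4_mult: "negaparity (4 * k) = negaparity k"
  using negaparity_double[of "2 * k"] negaparity_double[of "- k"] by simp

lemma negaparity_4_mult_plus_1: "negaparity (4 * k + 1) = 1 - negaparity k"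
  using negaparity_double_plus_1[of "2 * k"] negaparity_double[of "- k"] by simp

lemma negaparity_4_mult_plus_2: "negaparity (4 * k + 2) = 1 - negaparity (k + 1)"
  using negaparity_double[of "2 * k + 1"] negaparity_double_plus_1[of "- (k + 1)"]
  by (simp add: algebra_simps)

lemma negaparity_4_mult_plus_3: "negaparity (4 * k + 3) = negaparity (k + 1)"
  using negaparity_double_plus_1[of "2 * k + 1"] negaparity_double_plus_1[of "- (k + 1)"]
    negaparity_less_2[of "k + 1"]
  by (simp add: algebra_simps)

lemma g_less_2: "g n < 2"
  by (simp add: g_eq_negaparity negaparity_less_2)

lemma g_4_mult: "g (4 * k) = g k"
  using negaparity_4_mult[of "int k"] by (simp add: g_eq_negaparity add.commute)

lemma g_4_mult_plus_1: "g (4 * k + 1) = 1 - g k"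
  using negaparity_4_mult_plus_1[of "int k"] by (simp add: g_eq_negaparity add.commute)

lemma g_4_mult_plus_2: "g (4 * k + 2) = 1 - g (k + 1)"
  using negaparity_4_mult_plus_2[of "int k"] by (simp add: g_eq_negaparity add.commute)

lemma g_4_mult_plus_3: "g (4 * k + 3) = g (k + 1)"
  using negaparity_4_mult_plus_3[of "int k"] by (simp add: g_eq_negaparity add.commute)

lemma g_Suc_neq_if_even:
  assumes "even n"
  shows "g (Suc n) \<noteq> g n"
proof -
  define k where "k = n div 4"
  have "n = 4 * k \<or> n = 4 * k + 2"
    using assms unfolding k_def by presburger
  then show ?thesis
  proof
    assume "n = 4 * k"
    then show ?thesis using g_4_mult[of k] g_4_mult_plus_1[of k] g_less_2[of k]
      by (auto simp: less_2_cases_iff)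
  next
    assume n: "n = 4 * k + 2"
    then have "Suc n = 4 * k + 3" by simp
    then have "g n = 1 - g (k + 1)" "g (Suc n) = g (k + 1)"
      by (simp_all only: n g_4_mult_plus_2 g_4_mult_plus_3)
    then show ?thesis using g_less_2[of "k + 1"] by arith
  qed
qed

lemma g_Suc_eq_if_mod_4_eq_3:
  assumes "n mod 4 = 3"
  shows "g (Suc n) = g n"
proof -
  define k where "k = n div 4"
  have "n = 4 * k + 3" "Suc n = 4 * (k + 1)"
    using assms unfolding k_def by presburger+
  then show ?thesis using g_4_mult_plus_3[of k] g_4_mult[of "k + 1"] by simp
qed

lemma g_Suc_eq_iff_if_mod_4_eq_1:
  assumes "n mod 4 = 1"
  shows "g (Suc n) = g n \<longleftrightarrow> g (Suc (n div 4)) = g (n div 4)"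
proof -
  define k where "k = n div 4"
  have n: "n = 4 * k + 1" and "Suc n = 4 * k + 2"
    using assms unfolding k_def by presburger+
  then have "g n = 1 - g k" "g (Suc n) = 1 - g (k + 1)"
    using g_4_mult_plus_1[of k] g_4_mult_plus_2[of k] by simp_all
  then show ?thesis
    using g_less_2[of k] g_less_2[of "k + 1"] unfolding k_def by (auto simp: less_2_cases_iff)
qed

definition cube_at :: "(nat \<Rightarrow> 'a) \<Rightarrow> nat \<Rightarrow> nat \<Rightarrow> bool" where
  "cube_at w a p \<longleftrightarrow> (\<forall>i < 2 * p. w (a + i) = w (a + i + p))"

lemma cube_atD:
  assumes "cube_at w a p" "a \<le> j" "j < a + 2 * p"
  shows "w (j + p) = w j"
  using assms unfolding cube_at_def
  by (metis add.commute le_add_diff_inverse nat_add_left_cancel_less)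

lemma cube_at_Suc_eq_iff:
  assumes "cube_at w a p" "a \<le> j" "Suc j < a + 2 * p"
  shows "w (Suc (j + p)) = w (j + p) \<longleftrightarrow> w (Suc j) = w j"
  using cube_atD[OF assms(1), of j] cube_atD[OF assms(1), of "Suc j"] assms(2,3) by simp

lemma g_not_cube_at_1: "\<not> cube_at g a 1"
proof
  assume "cube_at g a 1"
  then have "g (Suc a) = g a" "g (Suc (Suc a)) = g (Suc a)"
    using cube_atD[of g a 1 a] cube_atD[of g a 1 "Suc a"] by simp_all
  moreover have "even a \<or> even (Suc a)" by simp
  ultimately show False using g_Suc_neq_if_even by metis
qed

lemma g_not_cube_at_2: "\<not> cube_at g a 2"
proof
  assume cube: "cube_at g a 2"
  \<comment> \<open>Here the residue argument fails; instead, \<open>g (j + 2) = g j\<close> on 0/1 values makes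
    the pattern of changes constant on the window.\<close>
  have step: "g (Suc (Suc j)) = g (Suc j) \<longleftrightarrow> g (Suc j) = g j"
    if "a \<le> j" "j \<le> a + 2" for j
    using cube_atD[OF cube, of j] that g_less_2[of j] g_less_2[of "Suc j"] g_less_2[of "j + 2"]
    by auto
  have same: "g (Suc j) = g j \<longleftrightarrow> g (Suc a) = g a" if "a \<le> j" "j \<le> a + 3" for j
  proof -
    have "j = a \<or> j = Suc a \<or> j = Suc (Suc a) \<or> j = Suc (Suc (Suc a))"
      using that by auto
    then show ?thesis using step[of a] step[of "Suc a"] step[of "Suc (Suc a)"] by auto
  qed
  have "\<exists>j. a \<le> j \<and> j \<le> a + 3 \<and> j mod 4 = 3" by presburger
  then obtain j where j: "a \<le> j" "j \<le> a + 3" "j mod 4 = 3" by blast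
  have "\<exists>j. a \<le> j \<and> j \<le> a + 3 \<and> even j" by presburger
  then obtain j' where j': "a \<le> j'" "j' \<le> a + 3" "even j'" by blast
  show False
    using same[OF j(1,2)] same[OF j'(1,2)] g_Suc_eq_if_mod_4_eq_3[OF j(3)] g_Suc_neq_if_even[OF j'(3)]
    by simp
qed

lemma g_not_cube_at_odd:
  assumes "odd p" "p \<ge> 3"
  shows "\<not> cube_at g a p"
proof
  assume cube: "cube_at g a p"
  have "\<exists>j. a \<le> j \<and> j \<le> a + 3 \<and> (j + p) mod 4 = 3" by presburger
  then obtain j where j: "a \<le> j" "j \<le> a + 3" "(j + p) mod 4 = 3" by blast
  have "Suc j < a + 2 * p" using j(2) assms(2) by simp
  with g_Suc_eq_if_mod_4_eq_3[OF j(3)] have "g (Suc j) = g j"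
    using cube_at_Suc_eq_iff[OF cube j(1)] by simp
  moreover have "even j" using j(3) assms(1) by presburger
  ultimately show False using g_Suc_neq_if_even by blast
qed

lemma g_not_cube_at_2_mod_4:
  assumes "p mod 4 = 2" "p \<ge> 6"
  shows "\<not> cube_at g a p"
proof
  assume cube: "cube_at g a p"
  have "\<exists>j. a \<le> j \<and> j \<le> a + 3 \<and> j mod 4 = 1" by presburger
  then obtain j where j: "a \<le> j" "j \<le> a + 3" "j mod 4 = 1" by blast
  have flat: "g (Suc i) = g i" if "i = j \<or> i = j + 4" for i
  proof -
    have i: "a \<le> i" "Suc i < a + 2 * p" using that j(1,2) assms(2) by auto
    have "i mod 4 = 1" using that j(3) by auto
    then have "(i + p) mod 4 = 3" using assms(1) by (simp add: mod_add_eq[symmetric])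
    then have "g (Suc (i + p)) = g (i + p)" by (rule g_Suc_eq_if_mod_4_eq_3)
    then show ?thesis using cube_at_Suc_eq_iff[OF cube i] by simp
  qed
  have "(j + 4) mod 4 = 1" "(j + 4) div 4 = Suc (j div 4)" using j(3) by simp_all
  then have "g (Suc (j div 4)) = g (j div 4)" "g (Suc (Suc (j div 4))) = g (Suc (j div 4))"
    using flat[of j] flat[of "j + 4"] g_Suc_eq_iff_if_mod_4_eq_1[OF j(3)]
      g_Suc_eq_iff_if_mod_4_eq_1[of "j + 4"]
    by simp_all
  moreover have "even (j div 4) \<or> even (Suc (j div 4))" by simp
  ultimately show False using g_Suc_neq_if_even by blast
qed

lemma g_cube_at_4_mult_descend:
  assumes "cube_at g a (4 * q)"
  shows "cube_at g ((a + 3) div 4) q"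
  unfolding cube_at_def
proof (intro allI impI)
  fix i assume "i < 2 * q"
  define b where "b = (a + 3) div 4"
  have "a \<le> 4 * (b + i)" "4 * (b + i) < a + 2 * (4 * q)"
    using \<open>i < 2 * q\<close> unfolding b_def by auto
  then have "g (4 * (b + i + q)) = g (4 * (b + i))"
    using cube_atD[OF assms, of "4 * (b + i)"] by (simp add: algebra_simps)
  then show "g (b + i) = g (b + i + q)" unfolding b_def g_4_mult by simp
qed

lemma g_not_cube_at:
  assumes "0 < p"
  shows "\<not> cube_at g a p"
  using assms
proof (induction p arbitrary: a rule: less_induct)
  case (less p)
  have "p = 1 \<or> p = 2 \<or> (odd p \<and> p \<ge> 3) \<or> (p mod 4 = 2 \<and> p \<ge> 6) \<or> (\<exists>q. p = 4 * q \<and> 0 < q)"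
    using less.prems by presburger
  then show ?case
  proof (elim disjE exE conjE)
    fix q assume "p = 4 * q" "0 < q"
    then show ?thesis
      using less.IH[of q "(a + 3) div 4"] g_cube_at_4_mult_descend by auto
  qed (use g_not_cube_at_1 g_not_cube_at_2 g_not_cube_at_odd g_not_cube_at_2_mod_4 in auto)
qed

lemma cube_at_if_cubed_word:
  assumes "\<forall>i < 3 * length X. w (a + i) = X ! (i mod length X)"
  shows "cube_at w a (length X)"
  unfolding cube_at_def
proof (intro allI impI)
  fix i assume "i < 2 * length X"
  then have "w (a + i) = X ! (i mod length X)"
    and "w (a + (i + length X)) = X ! ((i + length X) mod length X)"
    using assms by auto
  then show "w (a + i) = w (a + i + length X)" by (simp add: add.assoc)
qed

theorem theorem5:
  shows "\<not> (\<exists>(X :: nat list) (a :: nat). X \<noteq> [] \<and> set X \<subseteq> {0, 1} \<and>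
            (\<forall>i < 3 * length X. g (a + i) = X ! (i mod length X)))"
  using cube_at_if_cubed_word g_not_cube_at by blast

end
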